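(* For every $n\ge1$, if $T\in\mathcal{T}_n$ satisfies $\mathcal{C}(T)=c_n$, then $\mathcal{S}(T)=\min\{\mathcal{S}(T'):T'\in\mathcal{T}_n\}$.
   Context: Bifurcating trees: rooted trees in which every internal node has exactly two children, considered up to isomorphism; $\mathcal{T}_n$ is the set of such trees with $n$ leaves. For a node $w$, $\kappa_T(w)$ is its number of descendant leaves. The Colless index is $\mathcal{C}(T)=\sum_{v}|\kappa_T(v_1)-\kappa_T(v_2)|$, summed over internal nodes $v$ with children $v_1,v_2$; $c_n=\min\{\mathcal{C}(T):T\in\mathcal{T}_n\}$. The Sackin index is $\mathcal{S}(T)=\sum_{x}\delta_T(x)$, the sum over leaves $x$ of their depth (number of edges from the root), equivalently $\sum_{v}\kappa_T(v)$ over internal nodes $v$. *)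

theory Defs
  imports Main
begin

text \<open>Trees are represented as ordered
  trees; Colless and Sackin indices are invariant under swapping children,
  so minima over ordered trees coincide with minima over isomorphism classes.\<close>
datatype btree = Leaf | Node btree btree

fun leaves :: "btree \<Rightarrow> nat" where
  "leaves Leaf = 1"
| "leaves (Node l r) = leaves l + leaves r"

fun colless :: "btree \<Rightarrow> nat" where
  "colless Leaf = 0"
| "colless (Node l r) = colless l + colless r
      + (if leaves l \<ge> leaves r then leaves l - leaves r else leaves r - leaves l)"

fun sackin :: "btree \<Rightarrow> nat" where
  "sackin Leaf = 0"
| "sackin (Node l r) = sackin l + sackin r + leaves l + leaves r"

definition trees :: "nat \<Rightarrow> btree set" where
  "trees n = {t. leaves t = n}"

definition min_colless :: "nat \<Rightarrow> nat" where
  "min_colless n = Min (colless ` trees n)"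

end

theory Submission
  imports Defs
begin

text \<open>Let \<open>bal n\<close> be the maximally balanced tree with \<open>n\<close> leaves and \<open>c n\<close> its Colless
  index. Halving both arguments shows \<open>c (a + b) \<le> c a + c b + \<bar>a - b\<bar>\<close>, with strict
  inequality when a power of two lies strictly between \<open>a\<close> and \<open>b\<close>. Hence \<open>c n\<close> is the minimum
  Colless index, and in a Colless-minimal tree every subtree is Colless-minimal and no internal
  node separates its two leaf counts by a power of two. For every \<open>k\<close>, \<open>n (k + 2) - 2^(k+1)\<close>
  bounds the Sackin index of all \<open>n\<close>-leaf trees from below; for \<open>2^k \<le> n \<le> 2^(k+1)\<close> the
  children of a Colless-minimal tree have leaf counts in \<open>[2^(k-1), 2^k]\<close>, so by induction the
  bound is attained exactly.\<close>

definition pow2_between :: "nat \<Rightarrow> nat \<Rightarrow> bool" where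
  "pow2_between a b \<longleftrightarrow> (\<exists>k. a < 2^k \<and> 2^k < b \<or> b < 2^k \<and> 2^k < a)"

lemma pow2_between_commute: "pow2_between a b \<longleftrightarrow> pow2_between b a"
  unfolding pow2_between_def by blast

lemma pow2_between_one_iff: "pow2_between 1 b \<longleftrightarrow> 3 \<le> b"
proof
  assume "pow2_between 1 b"
  then obtain k where "1 < (2::nat)^k" "2^k < b"
    unfolding pow2_between_def by auto
  moreover from \<open>1 < 2^k\<close> have "2 \<le> (2::nat)^k"
    by (cases k) auto
  ultimately show "3 \<le> b" by linarith
next
  assume "3 \<le> b"
  then show "pow2_between 1 b"
    unfolding pow2_between_def by (intro exI[of _ 1]) auto
qed

lemma pow2_between_halves:
  assumes "pow2_between (2 * p + r) (2 * q + s)" "0 < p" "0 < q" "r < 2" "s < 2"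
  shows "pow2_between p (q + s) \<or> pow2_between (p + r) q"
proof -
  obtain k where k: "2 * p + r < 2^k \<and> 2^k < 2 * q + s \<or> 2 * q + s < 2^k \<and> 2^k < 2 * p + r"
    using assms(1) unfolding pow2_between_def by blast
  with assms(2,3) obtain j where "k = Suc j"
    by (cases k) auto
  with k assms(4,5) have "p < 2^j \<and> 2^j < q + s \<or> q < 2^j \<and> 2^j < p + r"
    by auto
  then show ?thesis
    unfolding pow2_between_def by blast
qed

lemma summand_between_powers_if_not_pow2_between:
  assumes "\<not> pow2_between a b" "2^Suc j \<le> a + b" "a + b \<le> 2^Suc (Suc j)"
  shows "2^j \<le> a \<and> a \<le> 2^Suc j"
proof (rule ccontr)
  assume "\<not> ?thesis"
  then have "a < 2^j \<and> 2^j < b \<or> b < 2^Suc j \<and> 2^Suc j < a"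
    using assms(2,3) by auto
  then show False
    using assms(1) unfolding pow2_between_def by blast
qed

fun bal :: "nat \<Rightarrow> btree" where
  "bal n = (if n \<le> 1 then Leaf else Node (bal ((n + 1) div 2)) (bal (n div 2)))"

declare bal.simps [simp del]

lemma leaves_pos: "0 < leaves t"
  by (induction t) auto

lemma leaves_bal: "0 < n \<Longrightarrow> leaves (bal n) = n"
  by (induction n rule: bal.induct) (subst bal.simps, auto)

lemma colless_bal:
  assumes "2 \<le> n"
  shows "colless (bal n) = colless (bal ((n + 1) div 2)) + colless (bal (n div 2)) + n mod 2"
proof -
  have "(n + 1) div 2 = n div 2 + n mod 2" by presburger
  with assms show ?thesis by (subst bal.simps) (simp add: leaves_bal)
qed

lemma bal_1 [simp]: "bal (Suc 0) = Leaf" "bal 1 = Leaf"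
  by (subst bal.simps, simp)+

lemma colless_bal_double:
  assumes "0 < m" "r < 2"
  shows "colless (bal (2 * m + r)) = colless (bal (m + r)) + colless (bal m) + r"
proof -
  have "(2 * m + r + 1) div 2 = m + r" "(2 * m + r) div 2 = m" "(2 * m + r) mod 2 = r"
    using assms(2) by presburger+
  with colless_bal[of "2 * m + r"] assms show ?thesis by simp
qed

definition colless_excess :: "nat \<Rightarrow> nat \<Rightarrow> int" where
  "colless_excess a b = int (colless (bal a)) + int (colless (bal b)) + \<bar>int a - int b\<bar>
     - int (colless (bal (a + b)))"

lemma colless_excess_commute: "colless_excess a b = colless_excess b a"
  unfolding colless_excess_def by (simp add: add.commute abs_minus_commute)

lemma colless_excess_one_double:
  assumes "0 < d" "r < 2"
  shows "colless_excess 1 (2 * d + r) = colless_excess 1 d + int d + 3 * int r - 1"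
proof -
  have "(2 * d + r + 1) div 2 = d + r" "(2 * d + r) div 2 = d" "(2 * d + r) mod 2 = r"
       "(2 * d + r + 2) div 2 = d + 1" "(2 * d + r + 1) mod 2 = 1 - r"
    using assms(2) by presburger+
  then show ?thesis
    using colless_bal[of "2 * d + r"] colless_bal[of "2 * d + r + 1"] assms
    unfolding colless_excess_def by (simp add: add.commute add.left_commute)
qed

lemma colless_excess_one:
  "0 < b \<Longrightarrow> 0 \<le> colless_excess 1 b \<and> (3 \<le> b \<longrightarrow> 0 < colless_excess 1 b)"
proof (induction b rule: less_induct)
  case (less b)
  show ?case
  proof (cases "b = 1")
    case True
    have "bal 2 = Node Leaf Leaf"
      by (subst bal.simps) simp
    then have "colless_excess 1 1 = 0"
      unfolding colless_excess_def one_add_one by simp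
    with True show ?thesis by simp
  next
    case False
    define d r where "d = b div 2" and "r = b mod 2"
    with less.prems False have b: "b = 2 * d + r" "0 < d" "r < 2" "d < b"
      by auto
    with less.IH[of d] have "0 \<le> colless_excess 1 d" by simp
    with b show ?thesis
      using colless_excess_one_double[of d r] by auto
  qed
qed

text \<open>The halves of \<open>a + b\<close> pair the larger half of one summand with the smaller half of the
  other.\<close>
lemma colless_bal_add_halves:
  assumes "0 < p" "0 < q" "r < 2" "s < 2"
  shows "colless (bal ((2 * p + r) + (2 * q + s)))
    = colless (bal (p + (q + s))) + colless (bal ((p + r) + q)) + (r + s) mod 2"
proof -
  consider "r = 0" "s = 0" | "r = 1" "s = 0" | "r = 0" "s = 1" | "r = 1" "s = 1"
    using assms(3,4) by linarith
  then show ?thesis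
  proof cases
    case 1
    then show ?thesis using colless_bal_double[of "p + q" 0] assms by (simp add: algebra_simps)
  next
    case 2
    then show ?thesis using colless_bal_double[of "p + q" 1] assms by (simp add: algebra_simps)
  next
    case 3
    then show ?thesis using colless_bal_double[of "p + q" 1] assms by (simp add: algebra_simps)
  next
    case 4
    then show ?thesis using colless_bal_double[of "p + q + 1" 0] assms by (simp add: algebra_simps)
  qed
qed

lemma colless_excess_halves:
  assumes "0 < p" "0 < q" "r < 2" "s < 2"
  shows "colless_excess p (q + s) + colless_excess (p + r) q \<le> colless_excess (2 * p + r) (2 * q + s)"
  using colless_bal_add_halves[OF assms] colless_bal_double[of p r] colless_bal_double[of q s] assms
  unfolding colless_excess_def by (cases r; cases s) (auto simp: abs_if)

lemma colless_excess_sign: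
  assumes "0 < a" "0 < b"
  shows "0 \<le> colless_excess a b \<and> (pow2_between a b \<longrightarrow> 0 < colless_excess a b)"
  using assms
proof (induction "a + b" arbitrary: a b rule: less_induct)
  case less
  consider "a = 1" | "b = 1" | "2 \<le> a" "2 \<le> b"
    using less.prems by linarith
  then show ?case
  proof cases
    case 1
    then show ?thesis
      using colless_excess_one[of b] less.prems pow2_between_one_iff by auto
  next
    case 2
    then show ?thesis
      using colless_excess_one[of a] less.prems pow2_between_one_iff
      by (auto simp: colless_excess_commute[of a] pow2_between_commute[of a])
  next
    case 3
    define p r q s where "p = a div 2" and "r = a mod 2" and "q = b div 2" and "s = b mod 2"
    with 3 have ab: "a = 2 * p + r" "b = 2 * q + s" "0 < p" "0 < q" "r < 2" "s < 2"
      by auto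
    then have "0 \<le> colless_excess p (q + s) \<and> (pow2_between p (q + s) \<longrightarrow> 0 < colless_excess p (q + s))"
      "0 \<le> colless_excess (p + r) q \<and> (pow2_between (p + r) q \<longrightarrow> 0 < colless_excess (p + r) q)"
      using less.hyps by auto
    with ab show ?thesis
      using colless_excess_halves[of p q r s] pow2_between_halves[of p r q s] by auto
  qed
qed

lemma int_colless_Node:
  "int (colless (Node l r)) = int (colless l) + int (colless r) + \<bar>int (leaves l) - int (leaves r)\<bar>"
  by simp

lemma colless_bal_le: "colless (bal (leaves t)) \<le> colless t"
proof (induction t)
  case (Node l r)
  have "0 \<le> colless_excess (leaves l) (leaves r)"
    using colless_excess_sign leaves_pos by blast
  with Node.IH show ?case
    using int_colless_Node[of l r] unfolding colless_excess_def by simp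
qed simp

lemma colless_minimal_Node:
  assumes "colless (Node l r) = colless (bal (leaves (Node l r)))"
  shows "colless l = colless (bal (leaves l))" "colless r = colless (bal (leaves r))"
    and "\<not> pow2_between (leaves l) (leaves r)"
proof -
  have "0 \<le> colless_excess (leaves l) (leaves r) \<and>
      (pow2_between (leaves l) (leaves r) \<longrightarrow> 0 < colless_excess (leaves l) (leaves r))"
    using colless_excess_sign leaves_pos by blast
  moreover have "colless (bal (leaves l)) \<le> colless l" "colless (bal (leaves r)) \<le> colless r"
    by (rule colless_bal_le)+
  moreover have "int (colless (Node l r)) = int (colless (bal (leaves l + leaves r)))"
    using assms by simp
  ultimately show "colless l = colless (bal (leaves l))" "colless r = colless (bal (leaves r))"
    and "\<not> pow2_between (leaves l) (leaves r)"
    using int_colless_Node[of l r] unfolding colless_excess_def by linarith+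
qed

text \<open>Since \<open>sackin_bound (k + 1) n - sackin_bound k n = n - 2^(k+1)\<close>, the maximum over \<open>k\<close> is
  attained at \<open>2^k \<le> n \<le> 2^(k+1)\<close>.\<close>
definition sackin_bound :: "nat \<Rightarrow> nat \<Rightarrow> int" where
  "sackin_bound k n = int n * (int k + 2) - 2 ^ Suc k"

lemma sackin_bound_Suc_add:
  "sackin_bound (Suc k) (a + b) = sackin_bound k a + sackin_bound k b + int (a + b)"
  by (simp add: sackin_bound_def algebra_simps)

lemma sackin_bound_le: "sackin_bound k (leaves t) \<le> int (sackin t)"
proof (induction t arbitrary: k)
  case Leaf
  have "Suc k < 2 ^ Suc k"
    by (rule less_exp)
  then have "int (Suc k) < 2 ^ Suc k"
    by (metis of_nat_less_iff of_nat_numeral of_nat_power)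
  then show ?case by (simp add: sackin_bound_def)
next
  case (Node l r)
  have "sackin_bound (Suc j) (leaves (Node l r)) \<le> int (sackin (Node l r))" for j
    using Node.IH[of j] by (simp add: sackin_bound_Suc_add)
  moreover have "sackin_bound 0 (leaves (Node l r)) \<le> sackin_bound 1 (leaves (Node l r))"
    using leaves_pos[of l] leaves_pos[of r] by (simp add: sackin_bound_def)
  ultimately show ?case
    by (cases k) (auto intro: order_trans)
qed

lemma sackin_eq_sackin_bound_if_colless_minimal:
  assumes "colless t = colless (bal (leaves t))" "2^k \<le> leaves t" "leaves t \<le> 2^Suc k"
  shows "int (sackin t) = sackin_bound k (leaves t)"
  using assms
proof (induction t arbitrary: k)
  case Leaf
  then have "k = 0"
    using power_le_one_iff[of "2::nat" k] by simp
  then show ?case by (simp add: sackin_bound_def)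
next
  case (Node l r)
  note minimal = colless_minimal_Node[OF Node.prems(1)]
  show ?case
  proof (cases k)
    case 0
    with Node.prems have "leaves l = 1" "leaves r = 1"
      using leaves_pos[of l] leaves_pos[of r] by auto
    with 0 minimal Node.IH[of 0] show ?thesis
      by (simp add: sackin_bound_def)
  next
    case (Suc j)
    with Node.prems(2,3) minimal(3) have "2^j \<le> leaves l \<and> leaves l \<le> 2^Suc j"
        "2^j \<le> leaves r \<and> leaves r \<le> 2^Suc j"
      using summand_between_powers_if_not_pow2_between[of "leaves l" "leaves r" j]
        summand_between_powers_if_not_pow2_between[of "leaves r" "leaves l" j]
      by (auto simp: pow2_between_commute add.commute)
    with Suc minimal Node.IH[of j] show ?thesis
      by (simp add: sackin_bound_Suc_add)
  qed
qed

lemma colless_le_sackin: "colless t \<le> sackin t"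
  by (induction t) auto

lemma sackin_le_square: "sackin t \<le> leaves t * leaves t"
proof (induction t)
  case (Node l r)
  have "leaves l \<le> leaves l * leaves r" "leaves r \<le> leaves l * leaves r"
    using leaves_pos[of l] leaves_pos[of r] by simp_all
  with Node.IH have "sackin l + sackin r + leaves l + leaves r
      \<le> leaves l * leaves l + leaves r * leaves r + leaves l * leaves r + leaves l * leaves r"
    by linarith
  then show ?case
    by (simp add: algebra_simps)
qed simp

lemma finite_sackin_trees: "finite (sackin ` trees n)"
  by (rule finite_subset[of _ "{..n * n}"]) (auto simp: trees_def intro: sackin_le_square)

lemma finite_colless_trees: "finite (colless ` trees n)"
  by (rule finite_subset[of _ "{..n * n}"])
    (auto simp: trees_def intro: order_trans[OF colless_le_sackin sackin_le_square])

theorem proposition9: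
  fixes n :: nat and T :: btree
  assumes "n \<ge> 1" and "T \<in> trees n" and "colless T = min_colless n"
  shows "sackin T = Min (sackin ` trees n)"
proof -
  have T: "leaves T = n"
    using assms(2) by (simp add: trees_def)
  have "bal n \<in> trees n"
    using assms(1) by (simp add: trees_def leaves_bal)
  then have "colless T \<le> colless (bal n)"
    using assms(3) finite_colless_trees unfolding min_colless_def by simp
  with colless_bal_le[of T] T have minimal: "colless T = colless (bal (leaves T))"
    by simp
  obtain k where k: "2^k \<le> n" "n < 2^Suc k"
    using ex_power_ivl1[of 2 n] assms(1) by auto
  with minimal T have sackin_T: "int (sackin T) = sackin_bound k n"
    using sackin_eq_sackin_bound_if_colless_minimal[of T k] by simp
  show ?thesis
  proof (rule Min_eqI[symmetric])
    fix y
    assume "y \<in> sackin ` trees n"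
    then obtain t where "leaves t = n" "y = sackin t"
      by (auto simp: trees_def)
    with sackin_T sackin_bound_le[of k t] show "sackin T \<le> y"
      by simp
  qed (use finite_sackin_trees assms(2) in auto)
qed

end
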